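(* Let $(M,d)$ be a bounded metric space with metric normal structure such that $\mathcal A(M)$ is compact, and let $T:M\to M$ be orbit-nonexpansive. Then $T$ has a fixed point, and the fixed point set $\mathrm{Fix}(T)$ is a one-local retract of $M$.
   Context: For a metric space $(M,d)$, a mapping $T:M\to M$ and $x\in M$, the orbit of $x$ is $o_T(x)=\{x\}\cup\{T^nx:n\in\mathbb N\}$. For $x\in M$ and bounded $A\subseteq M$, $D(x,A)=\sup\{d(x,a):a\in A\}$ and $\delta(A)=\sup\{d(x,y):x,y\in A\}$. A mapping $T:M\to M$ is orbit-nonexpansive if $d(Tx,Ty)\le D(x,o_T(y))$ for all $x,y\in M$. A subset of $M$ is admissible if it is an intersection of closed balls of $M$; $\mathcal A(M)$ denotes the family of admissible sets. $\mathcal A(M)$ is compact if every subfamily of $\mathcal A(M)$ all of whose finite intersections are nonempty has nonempty intersection. $(M,d)$ has metric normal structure if for every admissible set $A$ with more than one point there exists $z_A\in A$ with $D(z_A,A)<\delta(A)$. A subset $E\subseteq M$ is a one-local retract of $M$ if for every family of closed balls with centers in $E$ having nonempty intersection, that intersection meets $E$. *)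

theory Defs
  imports "HOL-Analysis.Analysis"
begin

text \<open>The metric space M is the whole type 'a (of class metric_space), with metric dist.\<close>

definition orbit :: "('a \<Rightarrow> 'a) \<Rightarrow> 'a \<Rightarrow> 'a set" where
  "orbit T x = {x} \<union> {(T ^^ n) x | n. n \<ge> 1}"

definition Dist :: "'a::metric_space \<Rightarrow> 'a set \<Rightarrow> real" where
  "Dist x A = (SUP a\<in>A. dist x a)"

definition diam_set :: "'a::metric_space set \<Rightarrow> real" where
  "diam_set A = (SUP p\<in>A \<times> A. dist (fst p) (snd p))"

definition orbit_nonexpansive :: "('a::metric_space \<Rightarrow> 'a) \<Rightarrow> bool" where
  "orbit_nonexpansive T \<longleftrightarrow> (\<forall>x y. dist (T x) (T y) \<le> Dist x (orbit T y))"

text \<open>Admissible sets: intersections of (arbitrary families of) closed balls of M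
  (the empty family gives M itself).\<close>
definition admissible :: "'a::metric_space set \<Rightarrow> bool" where
  "admissible A \<longleftrightarrow> (\<exists>B::('a \<times> real) set. A = (\<Inter>(c, r)\<in>B. cball c r))"

definition admissible_compact :: "'a::metric_space itself \<Rightarrow> bool" where
  "admissible_compact _ \<longleftrightarrow>
     (\<forall>F::'a set set. F \<subseteq> Collect admissible \<longrightarrow>
        (\<forall>G. G \<subseteq> F \<longrightarrow> finite G \<longrightarrow> \<Inter>G \<noteq> {}) \<longrightarrow> \<Inter>F \<noteq> {})"

definition metric_normal_structure :: "'a::metric_space itself \<Rightarrow> bool" where
  "metric_normal_structure _ \<longleftrightarrow>
     (\<forall>A::'a set. admissible A \<and> (\<exists>x y. x \<in> A \<and> y \<in> A \<and> x \<noteq> y) \<longrightarrow>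
        (\<exists>z\<in>A. Dist z A < diam_set A))"

definition one_local_retract :: "'a::metric_space set \<Rightarrow> bool" where
  "one_local_retract E \<longleftrightarrow>
     (\<forall>B::('a \<times> real) set. fst ` B \<subseteq> E \<longrightarrow>
        (\<Inter>(c, r)\<in>B. cball c r) \<noteq> {} \<longrightarrow> (\<Inter>(c, r)\<in>B. cball c r) \<inter> E \<noteq> {})"

end

theory Submission
  imports Defs
begin

text \<open>By compactness of the admissible sets and Zorn's lemma, every nonempty \<open>T\<close>-invariant
  admissible set contains a minimal one, \<open>K\<close>. Minimality forces \<open>K\<close> to be the admissible hull of
  \<open>T K\<close>, and orbit-nonexpansiveness then shows that the points of \<open>K\<close> within \<open>Dist z K\<close> of all
  of \<open>K\<close> again form an invariant admissible set; hence every point of \<open>K\<close> is diametral, and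
  normal structure makes \<open>K\<close> a singleton, whose point is fixed. An intersection of balls centred
  at fixed points is itself \<open>T\<close>-invariant, since the orbit of a fixed point is a singleton, so
  it contains a fixed point as soon as it is nonempty.\<close>

lemma subset_Zorn_minimal:
  assumes "\<And>C. subset.chain F C \<Longrightarrow> \<exists>L\<in>F. \<forall>X\<in>C. L \<subseteq> X"
  shows "\<exists>M\<in>F. \<forall>X\<in>F. X \<subseteq> M \<longrightarrow> X = M"
proof (rule predicate_Zorn)
  show "partial_order_on F (relation_of (\<lambda>X Y. Y \<subseteq> X) F)"
    by (auto simp: partial_order_on_def preorder_on_def refl_on_def relation_of_def trans_def antisym_def)
  show "\<exists>L\<in>F. \<forall>X\<in>C. L \<subseteq> X" if "C \<in> Chains (relation_of (\<lambda>X Y. Y \<subseteq> X) F)" for C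
    using that by (intro assms) (auto simp: subset_chain_def Chains_def relation_of_def)
qed

lemma admissible_INT_cball: "admissible (\<Inter>(c, r)\<in>B. cball c r)"
  unfolding admissible_def by blast

lemma admissible_cball: "admissible (cball c r)"
  using admissible_INT_cball[of "{(c, r)}"] by simp

lemma admissible_UNIV: "admissible UNIV"
  using admissible_INT_cball[of "{}"] by simp

lemma admissible_Inter:
  assumes "\<And>S. S \<in> SS \<Longrightarrow> admissible S"
  shows "admissible (\<Inter>SS)"
proof -
  obtain B where B: "\<And>S. S \<in> SS \<Longrightarrow> S = (\<Inter>(c, r)\<in>B S. cball c r)"
    using assms unfolding admissible_def by metis
  have "\<Inter>SS = (\<Inter>(c, r)\<in>(\<Union>S\<in>SS. B S). cball c r)"
    using B by (auto simp: split_beta)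
  then show ?thesis
    using admissible_INT_cball by metis
qed

lemma admissible_compact_chain_Inter:
  assumes "admissible_compact TYPE('a::metric_space)"
    and "subset.chain {S::'a set. admissible S \<and> S \<noteq> {}} C"
  shows "\<Inter>C \<noteq> {}"
proof -
  have "\<Inter>G \<noteq> {}" if "G \<subseteq> C" "finite G" for G
  proof (cases "G = {}")
    case False
    have "subset.chain {S::'a set. admissible S \<and> S \<noteq> {}} G"
      using assms(2) \<open>G \<subseteq> C\<close> unfolding subset_chain_def by (meson subset_trans subsetD)
    then have "\<Inter>G \<in> G"
      using Inter_in_chain \<open>finite G\<close> False by blast
    then show ?thesis
      using assms(2) \<open>G \<subseteq> C\<close> by (auto simp: subset_chain_def)
  qed simp
  moreover have "C \<subseteq> Collect admissible"
    using assms(2) by (auto simp: subset_chain_def)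
  ultimately show ?thesis
    using assms(1)[unfolded admissible_compact_def, rule_format, of C] by blast
qed

definition admissible_hull :: "'a::metric_space set \<Rightarrow> 'a set" where
  "admissible_hull S = (\<Inter>(c, r)\<in>{(c, r). S \<subseteq> cball c r}. cball c r)"

lemma admissible_admissible_hull: "admissible (admissible_hull S)"
  unfolding admissible_hull_def by (rule admissible_INT_cball)

lemma admissible_hull_subset: "S \<subseteq> admissible_hull S"
  unfolding admissible_hull_def by auto

lemma admissible_hull_minimal:
  assumes "admissible A" "S \<subseteq> A"
  shows "admissible_hull S \<subseteq> A"
proof -
  obtain B where B: "A = (\<Inter>(c, r)\<in>B. cball c r)"
    using assms(1) unfolding admissible_def by blast
  then have "S \<subseteq> cball c r" if "(c, r) \<in> B" for c r
    using assms(2) that by blast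
  then show ?thesis
    unfolding admissible_hull_def B by blast
qed

lemma admissible_hull_cball: "S \<subseteq> cball c r \<Longrightarrow> admissible_hull S \<subseteq> cball c r"
  by (rule admissible_hull_minimal[OF admissible_cball])

definition invariant_admissible :: "('a::metric_space \<Rightarrow> 'a) \<Rightarrow> 'a set \<Rightarrow> bool" where
  "invariant_admissible T K \<longleftrightarrow> K \<noteq> {} \<and> admissible K \<and> T ` K \<subseteq> K"

definition minimal_invariant_admissible :: "('a::metric_space \<Rightarrow> 'a) \<Rightarrow> 'a set \<Rightarrow> bool" where
  "minimal_invariant_admissible T K \<longleftrightarrow>
     invariant_admissible T K \<and> (\<forall>L. invariant_admissible T L \<longrightarrow> L \<subseteq> K \<longrightarrow> L = K)"

lemma minimal_invariant_admissible_exists: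
  assumes "admissible_compact TYPE('a::metric_space)"
    and "invariant_admissible T (A::'a set)"
  shows "\<exists>K\<subseteq>A. minimal_invariant_admissible T K"
proof -
  define F where "F = {S. S \<subseteq> A \<and> invariant_admissible T S}"
  have "\<exists>L\<in>F. \<forall>X\<in>C. L \<subseteq> X" if C: "subset.chain F C" for C
  proof (cases "C = {}")
    case True
    then show ?thesis
      using assms(2) by (auto simp: F_def)
  next
    case False
    have CF: "\<And>S. S \<in> C \<Longrightarrow> S \<subseteq> A \<and> S \<noteq> {} \<and> admissible S \<and> T ` S \<subseteq> S"
      using C by (auto simp: subset_chain_def F_def invariant_admissible_def)
    have "subset.chain {S. admissible S \<and> S \<noteq> {}} C"
      using C CF by (auto simp: subset_chain_def)
    then have "\<Inter>C \<noteq> {}"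
      using admissible_compact_chain_Inter[OF assms(1)] by blast
    moreover have "admissible (\<Inter>C)"
      by (rule admissible_Inter) (use CF in blast)
    moreover have "T ` \<Inter>C \<subseteq> \<Inter>C"
    proof (intro image_subsetI InterI)
      fix x S assume "x \<in> \<Inter>C" "S \<in> C"
      then show "T x \<in> S"
        using CF by blast
    qed
    moreover have "\<Inter>C \<subseteq> A"
      using CF False by blast
    ultimately show ?thesis
      unfolding F_def invariant_admissible_def by blast
  qed
  then have "\<exists>K\<in>F. \<forall>L\<in>F. L \<subseteq> K \<longrightarrow> L = K"
    by (rule subset_Zorn_minimal)
  then obtain K where K: "K \<in> F" and min: "\<And>L. L \<in> F \<Longrightarrow> L \<subseteq> K \<Longrightarrow> L = K"
    by blast
  have "minimal_invariant_admissible T K"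
    unfolding minimal_invariant_admissible_def
  proof (intro conjI allI impI)
    show "invariant_admissible T K"
      using K by (simp add: F_def)
    show "L = K" if "invariant_admissible T L" "L \<subseteq> K" for L
      using that K by (intro min) (auto simp: F_def)
  qed
  moreover have "K \<subseteq> A"
    using K by (simp add: F_def)
  ultimately show ?thesis
    by blast
qed

lemma minimal_invariant_admissible_hull_image:
  assumes "minimal_invariant_admissible T K"
  shows "admissible_hull (T ` K) = K"
proof -
  have K: "K \<noteq> {}" "admissible K" "T ` K \<subseteq> K"
    using assms by (auto simp: minimal_invariant_admissible_def invariant_admissible_def)
  then have "admissible_hull (T ` K) \<subseteq> K"
    by (rule_tac admissible_hull_minimal) auto
  moreover from this have "invariant_admissible T (admissible_hull (T ` K))"
    using K admissible_hull_subset[of "T ` K"]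
    by (auto simp: invariant_admissible_def admissible_admissible_hull)
  ultimately show ?thesis
    using assms by (auto simp: minimal_invariant_admissible_def)
qed

lemma orbit_subset:
  assumes "T ` K \<subseteq> K" "x \<in> K"
  shows "orbit T x \<subseteq> K"
proof -
  have "(T ^^ n) x \<in> K" for n
    by (induction n) (use assms in auto)
  then show ?thesis
    unfolding orbit_def using assms by auto
qed

lemma orbit_fixpoint:
  assumes "T c = c"
  shows "orbit T c = {c}"
proof -
  have "(T ^^ n) c = c" for n
    by (induction n) (use assms in auto)
  then show ?thesis
    unfolding orbit_def by auto
qed

lemma Dist_le:
  assumes "A \<noteq> {}" "\<And>y. y \<in> A \<Longrightarrow> dist x y \<le> s"
  shows "Dist x A \<le> s"
  unfolding Dist_def using assms by (rule cSUP_least)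

lemma Dist_singleton [simp]: "Dist x {c} = dist x c"
  by (simp add: Dist_def)

lemma dist_le_Dist:
  assumes "bounded (UNIV :: 'a::metric_space set)" "y \<in> A"
  shows "dist x y \<le> Dist x (A::'a set)"
proof -
  obtain a e where "\<forall>y::'a. dist a y \<le> e"
    using assms(1) unfolding bounded_def by auto
  then have "dist x y \<le> dist x a + e" for y
    by (metis add_left_mono dist_triangle order_trans)
  then have "bdd_above (dist x ` A)"
    by (intro bdd_aboveI[of _ "dist x a + e"]) auto
  then show ?thesis
    unfolding Dist_def using assms(2) by (rule cSUP_upper2) simp
qed

lemma diam_set_le:
  assumes "A \<noteq> {}" "\<And>x y. x \<in> A \<Longrightarrow> y \<in> A \<Longrightarrow> dist x y \<le> s"
  shows "diam_set A \<le> s"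
  unfolding diam_set_def using assms by (intro cSUP_least) auto

lemma orbit_nonexpansive_image_cball:
  assumes "orbit_nonexpansive T" "T ` K \<subseteq> K" "K \<subseteq> cball w s"
  shows "T ` K \<subseteq> cball (T w) s"
proof
  fix v assume "v \<in> T ` K"
  then obtain x where x: "x \<in> K" "v = T x"
    by blast
  have "dist (T w) (T x) \<le> Dist w (orbit T x)"
    using assms(1) unfolding orbit_nonexpansive_def by blast
  also have "\<dots> \<le> s"
  proof (rule Dist_le)
    show "orbit T x \<noteq> {}"
      by (simp add: orbit_def)
    show "dist w y \<le> s" if "y \<in> orbit T x" for y
      using that orbit_subset[OF assms(2) x(1)] assms(3) by auto
  qed
  finally show "v \<in> cball (T w) s"
    using x by simp
qed

lemma minimal_invariant_admissible_diametral:
  assumes "bounded (UNIV :: 'a::metric_space set)"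
    and "orbit_nonexpansive T"
    and "minimal_invariant_admissible T (K::'a set)"
    and "z \<in> K"
  shows "diam_set K \<le> Dist z K"
proof -
  define s where "s = Dist z K"
  define C where "C = K \<inter> (\<Inter>x\<in>K. cball x s)"
  have K: "admissible K" "T ` K \<subseteq> K"
    using assms(3) by (auto simp: minimal_invariant_admissible_def invariant_admissible_def)
  have "z \<in> C"
    using dist_le_Dist[OF assms(1)] assms(4) by (auto simp: C_def s_def dist_commute)
  moreover have "admissible C"
  proof -
    have "C = \<Inter>(insert K ((\<lambda>x. cball x s) ` K))"
      by (auto simp: C_def)
    moreover have "admissible (\<Inter>(insert K ((\<lambda>x. cball x s) ` K)))"
      by (rule admissible_Inter) (use K(1) admissible_cball in blast)
    ultimately show ?thesis
      by simp
  qed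
  moreover have "T ` C \<subseteq> C"
  proof
    fix v assume "v \<in> T ` C"
    then obtain w where w: "w \<in> C" "v = T w"
      by blast
    then have "K \<subseteq> cball w s"
      by (auto simp: C_def dist_commute)
    then have "T ` K \<subseteq> cball (T w) s"
      by (rule orbit_nonexpansive_image_cball[OF assms(2) K(2)])
    then have "admissible_hull (T ` K) \<subseteq> cball (T w) s"
      by (rule admissible_hull_cball)
    then have "K \<subseteq> cball (T w) s"
      by (simp only: minimal_invariant_admissible_hull_image[OF assms(3)])
    then show "v \<in> C"
      using w K(2) by (auto simp: C_def dist_commute)
  qed
  ultimately have "invariant_admissible T C"
    unfolding invariant_admissible_def by blast
  moreover have "C \<subseteq> K"
    by (simp add: C_def)
  ultimately have "C = K"
    using assms(3) unfolding minimal_invariant_admissible_def by blast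
  have "dist x y \<le> s" if "x \<in> K" "y \<in> K" for x y
  proof -
    have "y \<in> C"
      using that(2) \<open>C = K\<close> by simp
    then show ?thesis
      using that(1) by (simp add: C_def)
  qed
  then show ?thesis
    using assms(4) unfolding s_def by (intro diam_set_le) auto
qed

lemma minimal_invariant_admissible_fixpoint:
  assumes "bounded (UNIV :: 'a::metric_space set)"
    and "metric_normal_structure TYPE('a)"
    and "orbit_nonexpansive T"
    and "minimal_invariant_admissible T (K::'a set)"
  shows "\<exists>x\<in>K. T x = x"
proof -
  have K: "K \<noteq> {}" "admissible K" "T ` K \<subseteq> K"
    using assms(4) by (auto simp: minimal_invariant_admissible_def invariant_admissible_def)
  have "\<not> (\<exists>z\<in>K. Dist z K < diam_set K)"
    using minimal_invariant_admissible_diametral[OF assms(1,3,4)] by fastforce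
  then have "x = y" if "x \<in> K" "y \<in> K" for x y
    using assms(2) K(2) that unfolding metric_normal_structure_def by blast
  then show ?thesis
    using K(1,3) by blast
qed

lemma fixpoint_in_invariant_admissible:
  assumes "bounded (UNIV :: 'a::metric_space set)"
    and "metric_normal_structure TYPE('a)"
    and "admissible_compact TYPE('a)"
    and "orbit_nonexpansive T"
    and "invariant_admissible T (A::'a set)"
  shows "\<exists>x\<in>A. T x = x"
  using minimal_invariant_admissible_exists[OF assms(3,5)]
    minimal_invariant_admissible_fixpoint[OF assms(1,2,4)] by blast

lemma orbit_nonexpansive_INT_cball_fixpoints:
  assumes "orbit_nonexpansive T" "fst ` B \<subseteq> {x. T x = x}"
  shows "T ` (\<Inter>(c, r)\<in>B. cball c r) \<subseteq> (\<Inter>(c, r)\<in>B. cball c r)"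
proof (intro image_subsetI)
  fix x assume x: "x \<in> (\<Inter>(c, r)\<in>B. cball c r)"
  have "dist c (T x) \<le> r" if "(c, r) \<in> B" for c r
  proof -
    have "T c = c"
      using that assms(2) by force
    then have "dist (T x) c \<le> dist x c"
      using assms(1) unfolding orbit_nonexpansive_def
      by (metis Dist_singleton orbit_fixpoint)
    also have "\<dots> \<le> r"
      using x that by (auto simp: dist_commute)
    finally show ?thesis
      by (simp add: dist_commute)
  qed
  then show "T x \<in> (\<Inter>(c, r)\<in>B. cball c r)"
    by auto
qed

theorem corollary3p6:
  fixes T :: "'a::metric_space \<Rightarrow> 'a"
  assumes "bounded (UNIV :: 'a set)"
    and "metric_normal_structure TYPE('a)"
    and "admissible_compact TYPE('a)"
    and "orbit_nonexpansive T"
  shows "(\<exists>x. T x = x) \<and> one_local_retract {x. T x = x}"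
proof
  have "invariant_admissible T UNIV"
    by (simp add: invariant_admissible_def admissible_UNIV)
  then show "\<exists>x. T x = x"
    using fixpoint_in_invariant_admissible[OF assms] by blast
  show "one_local_retract {x. T x = x}"
    unfolding one_local_retract_def
  proof (intro allI impI)
    fix B :: "('a \<times> real) set"
    assume "fst ` B \<subseteq> {x. T x = x}" "(\<Inter>(c, r)\<in>B. cball c r) \<noteq> {}"
    then have "invariant_admissible T (\<Inter>(c, r)\<in>B. cball c r)"
      using orbit_nonexpansive_INT_cball_fixpoints[OF assms(4)]
      by (simp add: invariant_admissible_def admissible_INT_cball)
    then show "(\<Inter>(c, r)\<in>B. cball c r) \<inter> {x. T x = x} \<noteq> {}"
      using fixpoint_in_invariant_admissible[OF assms] by blast
  qed
qed

end
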